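(* Let $W$ be a finite set of possible worlds, let $G_1=(2^W,\gg_1)$ and $G_2$ be belief algebras on $W$, let $\bullet$ be an operator on belief algebras on $W$ satisfying (RA1)–(RA6), and let $G_*=(2^W,\gg_* )=\operatorname{Com}(G_1)\bullet\operatorname{Com}(G_2)$. Then $G_1\bullet G_2=\operatorname{Gen}((G_1\cap G_* )\cup G_2)$, and $$G_1\cap G_*=\{(U,V)\mid U\gg_1 V \text{ and } I_*(U)\gg_* I_*(V)\},$$ where $I_*$ denotes the support with respect to the backbone of $G_*$.
   Context: $W$ is a finite nonempty set; $R_W=\{(U,V)\mid U,V\subseteq W,\ U\cap V=\varnothing\}$. A belief algebra on $W$ is a pair $(2^W,\gg)$, $\gg$ a binary relation on $2^W$, such that for all $U,V,U_1,V_1,U_2,V_2\subseteq W$: (A0) $\gg\subseteq R_W$; (A1) $U\gg\varnothing$ iff $U\neq\varnothing$; (A2) $U\gg V$ implies not $V\gg U$; (A3) if $U_1\supseteq U$, $U\gg V$, $V\supseteq V_1$, $U_1\cap V_1=\varnothing$ then $U_1\gg V_1$; (A4) if $U=U_1\cup V_1=U_2\cup V_2$, $U_1\gg V_1$, $U_2\gg V_2$ then $U_1\cap U_2\gg V_1\cup V_2$. Belief algebras are identified with their relations as sets of pairs ($\subseteq,\cup,\cap$ accordingly). $\operatorname{Gen}(\Omega)$ for $\Omega\subseteq R_W$ is the smallest subset of $R_W$ that contains $\Omega$, contains $(U,\varnothing)$ for each nonempty $U$, and is closed under: $(U,V)$ in it, $U\subseteq U_1$, $V_1\subseteq V$, $U_1\cap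 V_1=\varnothing$ imply $(U_1,V_1)$ in it; $U_1\cup V_1=U_2\cup V_2$ with $(U_1,V_1),(U_2,V_2)$ in it imply $(U_1\cap U_2,V_1\cup V_2)$ in it. For a total preorder $\preceq$ on $W$ ($\omega\prec\omega'$ iff $\omega\preceq\omega'$ and not $\omega'\preceq\omega$), the relation $U\gg V$ iff $U\cap V=\varnothing$ and some $\omega_1\in U$ has $\omega_1\prec\omega_2$ for all $\omega_2\in V$ is a belief algebra; these are the complete belief algebras (CBAs). Every belief algebra has a unique backbone: nonempty pairwise disjoint $U_1,\dots,U_n$ with union $W$, $U_i\gg U_{i+1}$ for $i<n$, and any two disjoint nonempty subsets of a single $U_i$ incomparable under $\gg$. The support $I(V)$ of nonempty $V\subseteq W$ is $U_i$ for the least $i$ with $V\cap U_i\neq\varnothing$. $\operatorname{Com}(G)$ is the unique CBA containing $G$ with the same backbone as $G$ (the CBA of the total preorder ranking worlds by the index of their backbone block). $G\leq G'$ means $G,G'$ have the same backbone and $G\subseteq G'$. Postulates (for all belief algebras $G_1=(2^W,\gg_1)$, $G_2$, $G_1'$, $G_2'$): (RA1) $G_2\subseteq G_1\bullet G_2$. (RA2) $G_1\bullet G_2=\operatorname{Gen}(\Omega)$ for some $\Omega\subseteq G_1\cup G_2$. (RA3) If $G_1,G_2$ are CBAs then so is $G_1\bullet G_2$. (RA4) If $G_1,G_2$ are CBAs and $I_2(\{\omega\})=I_2(\{\omega'\})$ (support w.r.t. the backbone of $G_2$), then $(\{\omega\},\{\omega'\})\in G_1\bullet G_2$ iff $\{\omega\}\gg_1\{\omega'\}$.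 (RA5) If $G_1\leq G_1'$ and $G_2\leq G_2'$ then $G_1\bullet G_2\subseteq G_1'\bullet G_2'$. (RA6) If $\Omega\subseteq G_1\cup G_2$, $\operatorname{Gen}(\Omega)\subseteq\operatorname{Com}(G_1)\bullet\operatorname{Com}(G_2)$ and $G_1\bullet G_2\subseteq\operatorname{Gen}(\Omega)$, then $G_1\bullet G_2=\operatorname{Gen}(\Omega)$. *)

theory Defs
  imports Main
begin

type_synonym 'a balg = "('a set \<times> 'a set) set"

definition RW :: "'a set \<Rightarrow> 'a balg" where
  "RW W = {(U, V). U \<subseteq> W \<and> V \<subseteq> W \<and> U \<inter> V = {}}"

definition belief_algebra :: "'a set \<Rightarrow> 'a balg \<Rightarrow> bool" where
  "belief_algebra W G \<longleftrightarrow>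
     G \<subseteq> RW W \<and>
     (\<forall>U. U \<subseteq> W \<longrightarrow> ((U, {}) \<in> G \<longleftrightarrow> U \<noteq> {})) \<and>
     (\<forall>U V. (U, V) \<in> G \<longrightarrow> (V, U) \<notin> G) \<and>
     (\<forall>U V U1 V1. U1 \<subseteq> W \<and> U \<subseteq> U1 \<and> (U, V) \<in> G \<and> V1 \<subseteq> V \<and> U1 \<inter> V1 = {}
        \<longrightarrow> (U1, V1) \<in> G) \<and>
     (\<forall>U U1 V1 U2 V2. U = U1 \<union> V1 \<and> U = U2 \<union> V2 \<and> (U1, V1) \<in> G \<and> (U2, V2) \<in> G
        \<longrightarrow> (U1 \<inter> U2, V1 \<union> V2) \<in> G)"

definition cba_of :: "'a set \<Rightarrow> ('a \<times> 'a) set \<Rightarrow> 'a balg" where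
  "cba_of W R = {(U, V). U \<subseteq> W \<and> V \<subseteq> W \<and> U \<inter> V = {} \<and>
      (\<exists>w1\<in>U. \<forall>w2\<in>V. (w1, w2) \<in> R \<and> (w2, w1) \<notin> R)}"

definition total_preorder_on :: "'a set \<Rightarrow> ('a \<times> 'a) set \<Rightarrow> bool" where
  "total_preorder_on W R \<longleftrightarrow> R \<subseteq> W \<times> W \<and> refl_on W R \<and> trans R \<and> total_on W R"

definition is_cba :: "'a set \<Rightarrow> 'a balg \<Rightarrow> bool" where
  "is_cba W G \<longleftrightarrow> (\<exists>R. total_preorder_on W R \<and> G = cba_of W R)"

inductive_set Gen :: "'a set \<Rightarrow> 'a balg \<Rightarrow> 'a balg" for W \<Omega> where
  base: "p \<in> \<Omega> \<Longrightarrow> p \<in> RW W \<Longrightarrow> p \<in> Gen W \<Omega>"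
| empty: "U \<subseteq> W \<Longrightarrow> U \<noteq> {} \<Longrightarrow> (U, {}) \<in> Gen W \<Omega>"
| mono: "(U, V) \<in> Gen W \<Omega> \<Longrightarrow> U \<subseteq> U1 \<Longrightarrow> U1 \<subseteq> W \<Longrightarrow> V1 \<subseteq> V \<Longrightarrow> U1 \<inter> V1 = {}
          \<Longrightarrow> (U1, V1) \<in> Gen W \<Omega>"
| meet: "U1 \<union> V1 = U2 \<union> V2 \<Longrightarrow> (U1, V1) \<in> Gen W \<Omega> \<Longrightarrow> (U2, V2) \<in> Gen W \<Omega>
          \<Longrightarrow> (U1 \<inter> U2, V1 \<union> V2) \<in> Gen W \<Omega>"

text \<open>Backbone: list of blocks U_1,...,U_n (list index 0 = block U_1).\<close>
definition is_backbone :: "'a set \<Rightarrow> 'a balg \<Rightarrow> 'a set list \<Rightarrow> bool" where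
  "is_backbone W G bs \<longleftrightarrow>
     (\<forall>i < length bs. bs ! i \<noteq> {}) \<and>
     (\<forall>i < length bs. \<forall>j < length bs. i \<noteq> j \<longrightarrow> bs ! i \<inter> bs ! j = {}) \<and>
     \<Union> (set bs) = W \<and>
     (\<forall>i. i + 1 < length bs \<longrightarrow> (bs ! i, bs ! (i + 1)) \<in> G) \<and>
     (\<forall>i < length bs. \<forall>X Y. X \<subseteq> bs ! i \<and> Y \<subseteq> bs ! i \<and> X \<noteq> {} \<and> Y \<noteq> {} \<and> X \<inter> Y = {}
        \<longrightarrow> (X, Y) \<notin> G)"

definition backbone :: "'a set \<Rightarrow> 'a balg \<Rightarrow> 'a set list" where
  "backbone W G = (THE bs. is_backbone W G bs)"

text \<open>Support I(V) w.r.t. the backbone of G; convention I({}) = {}.\<close>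
definition support :: "'a set \<Rightarrow> 'a balg \<Rightarrow> 'a set \<Rightarrow> 'a set" where
  "support W G V = (if V = {} then {} else
     backbone W G ! (LEAST i. i < length (backbone W G) \<and> V \<inter> backbone W G ! i \<noteq> {}))"

definition block_index :: "'a set \<Rightarrow> 'a balg \<Rightarrow> 'a \<Rightarrow> nat" where
  "block_index W G w = (THE i. i < length (backbone W G) \<and> w \<in> backbone W G ! i)"

definition Com :: "'a set \<Rightarrow> 'a balg \<Rightarrow> 'a balg" where
  "Com W G = cba_of W {(w1, w2). w1 \<in> W \<and> w2 \<in> W \<and> block_index W G w1 \<le> block_index W G w2}"

definition ba_le :: "'a set \<Rightarrow> 'a balg \<Rightarrow> 'a balg \<Rightarrow> bool" where
  "ba_le W G G' \<longleftrightarrow> backbone W G = backbone W G' \<and> G \<subseteq> G'"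

definition revision_operator :: "'a set \<Rightarrow> ('a balg \<Rightarrow> 'a balg \<Rightarrow> 'a balg) \<Rightarrow> bool" where
  "revision_operator W op \<longleftrightarrow>
    (\<forall>G1 G2. belief_algebra W G1 \<and> belief_algebra W G2 \<longrightarrow> belief_algebra W (op G1 G2)) \<and>
    \<comment> \<open>RA1\<close>
    (\<forall>G1 G2. belief_algebra W G1 \<and> belief_algebra W G2 \<longrightarrow> G2 \<subseteq> op G1 G2) \<and>
    \<comment> \<open>RA2\<close>
    (\<forall>G1 G2. belief_algebra W G1 \<and> belief_algebra W G2 \<longrightarrow>
       (\<exists>\<Omega>. \<Omega> \<subseteq> G1 \<union> G2 \<and> op G1 G2 = Gen W \<Omega>)) \<and>
    \<comment> \<open>RA3\<close>
    (\<forall>G1 G2. is_cba W G1 \<and> is_cba W G2 \<longrightarrow> is_cba W (op G1 G2)) \<and>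
    \<comment> \<open>RA4\<close>
    (\<forall>G1 G2 w w'. is_cba W G1 \<and> is_cba W G2 \<and> w \<in> W \<and> w' \<in> W \<and>
       support W G2 {w} = support W G2 {w'} \<longrightarrow>
       (({w}, {w'}) \<in> op G1 G2 \<longleftrightarrow> ({w}, {w'}) \<in> G1)) \<and>
    \<comment> \<open>RA5\<close>
    (\<forall>G1 G2 G1' G2'. belief_algebra W G1 \<and> belief_algebra W G2 \<and>
       belief_algebra W G1' \<and> belief_algebra W G2' \<and>
       ba_le W G1 G1' \<and> ba_le W G2 G2' \<longrightarrow> op G1 G2 \<subseteq> op G1' G2') \<and>
    \<comment> \<open>RA6\<close>
    (\<forall>G1 G2 \<Omega>. belief_algebra W G1 \<and> belief_algebra W G2 \<and> \<Omega> \<subseteq> G1 \<union> G2 \<and>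
       Gen W \<Omega> \<subseteq> op (Com W G1) (Com W G2) \<and> op G1 G2 \<subseteq> Gen W \<Omega> \<longrightarrow>
       op G1 G2 = Gen W \<Omega>)"

end

(*
  Each G_i lies in Com(G_i) and has the same backbone, so RA5 gives G1 \<bullet> G2 \<subseteq> Gs, where
  Gs = Com(G1) \<bullet> Com(G2).  By RA2, G1 \<bullet> G2 = Gen(\<Omega>) for some \<Omega> \<subseteq> G1 \<union> G2; since
  \<Omega> \<subseteq> G1 \<bullet> G2 \<subseteq> Gs, in fact \<Omega> \<subseteq> (G1 \<inter> Gs) \<union> G2, whence
  G1 \<bullet> G2 \<subseteq> Gen((G1 \<inter> Gs) \<union> G2).  Conversely Gs is a belief algebra containing G2
  (RA1), so Gen((G1 \<inter> Gs) \<union> G2) \<subseteq> Gs, and RA6 turns the two inclusions into an equality.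

  By RA3, Gs is complete, and a complete belief algebra is the one obtained by ranking worlds by
  the index of their backbone block.  It relates disjoint U and V iff the least rank met by U is
  smaller than the least rank met by V, i.e. iff it relates the supports I(U) and I(V).

  Backbones exist because a cut X >> S - X of least cardinality is a valid first block, and they
  are unique because the first block B of any backbone of S satisfies B >> S - B.
*)

theory Submission
  imports Defs
begin

lemma ex_less_all_iff_Min:
  fixes f :: "'a \<Rightarrow> 'b::linorder"
  assumes fin: "finite (f ` U)" "finite (f ` V)" and ne: "U \<noteq> {}" "V \<noteq> {}"
  shows "(\<exists>a\<in>U. \<forall>b\<in>V. f a < f b) \<longleftrightarrow> Min (f ` U) < Min (f ` V)"
proof
  assume "\<exists>a\<in>U. \<forall>b\<in>V. f a < f b"
  then obtain a where "a \<in> U" "\<forall>b\<in>V. f a < f b" by blast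
  moreover obtain b where "b \<in> V" "f b = Min (f ` V)"
    using Min_in[OF fin(2)] ne(2) by (metis empty_is_image imageE)
  moreover have "Min (f ` U) \<le> f a"
    using Min_le[OF fin(1)] \<open>a \<in> U\<close> by simp
  ultimately show "Min (f ` U) < Min (f ` V)" by force
next
  assume less: "Min (f ` U) < Min (f ` V)"
  obtain a where "a \<in> U" "f a = Min (f ` U)"
    using Min_in[OF fin(1)] ne(1) by (metis empty_is_image imageE)
  moreover have "\<forall>b\<in>V. Min (f ` V) \<le> f b"
    using Min_le[OF fin(2)] by simp
  ultimately show "\<exists>a\<in>U. \<forall>b\<in>V. f a < f b"
    using less by (metis less_le_trans)
qed

lemma sorted_wrt_disjnt_iff_nth:
  "sorted_wrt disjnt xs \<longleftrightarrow> (\<forall>i<length xs. \<forall>j<length xs. i \<noteq> j \<longrightarrow> xs ! i \<inter> xs ! j = {})"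
  (is "_ \<longleftrightarrow> ?pairwise")
proof
  assume xs: "sorted_wrt disjnt xs"
  show ?pairwise
  proof (intro allI impI)
    fix i j assume ij: "i < length xs" "j < length xs" "i \<noteq> j"
    show "xs ! i \<inter> xs ! j = {}"
    proof (cases "i < j")
      case True
      then show ?thesis using sorted_wrt_nth_less[OF xs True ij(2)] by (simp add: disjnt_def)
    next
      case False
      then have "j < i" using ij(3) by simp
      then show ?thesis using sorted_wrt_nth_less[OF xs _ ij(1)] by (auto simp: disjnt_def)
    qed
  qed
next
  assume ?pairwise
  then show "sorted_wrt disjnt xs"
    unfolding sorted_wrt_iff_nth_less disjnt_def by (simp add: less_imp_neq)
qed

section \<open>Belief algebras\<close>

lemma belief_algebra_subset_RW: "belief_algebra W G \<Longrightarrow> G \<subseteq> RW W"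
  unfolding belief_algebra_def by (rule conjunct1)

lemma belief_algebra_RW: "belief_algebra W G \<Longrightarrow> (U, V) \<in> G \<Longrightarrow> U \<subseteq> W \<and> V \<subseteq> W \<and> U \<inter> V = {}"
  unfolding belief_algebra_def RW_def by (elim conjE) blast

lemma belief_algebra_empty_iff: "belief_algebra W G \<Longrightarrow> U \<subseteq> W \<Longrightarrow> (U, {}) \<in> G \<longleftrightarrow> U \<noteq> {}"
  unfolding belief_algebra_def by (elim conjE) blast

lemma belief_algebra_mono:
  "belief_algebra W G \<Longrightarrow> (U, V) \<in> G \<Longrightarrow> U \<subseteq> U1 \<Longrightarrow> U1 \<subseteq> W \<Longrightarrow> V1 \<subseteq> V \<Longrightarrow> U1 \<inter> V1 = {}
    \<Longrightarrow> (U1, V1) \<in> G"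
  unfolding belief_algebra_def by metis

lemma belief_algebra_meet:
  "belief_algebra W G \<Longrightarrow> U1 \<union> V1 = U2 \<union> V2 \<Longrightarrow> (U1, V1) \<in> G \<Longrightarrow> (U2, V2) \<in> G
    \<Longrightarrow> (U1 \<inter> U2, V1 \<union> V2) \<in> G"
  unfolding belief_algebra_def by metis

lemma belief_algebra_shrink:
  assumes ba: "belief_algebra W G" and UV: "(U, V) \<in> G" and V1: "V1 \<subseteq> V"
  shows "(U, V1) \<in> G"
  using belief_algebra_RW[OF ba UV] V1 by (intro belief_algebra_mono[OF ba UV order_refl]) auto

lemma belief_algebra_left_nonempty: "belief_algebra W G \<Longrightarrow> (U, V) \<in> G \<Longrightarrow> U \<noteq> {}"
  using belief_algebra_shrink[of W G U V "{}"] belief_algebra_empty_iff[of W G "{}"] by blast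

lemma belief_algebra_chain:
  assumes ba: "belief_algebra W G" and UV: "(U, V) \<in> G" and Z: "(U \<union> V, Z) \<in> G"
  shows "(U, V \<union> Z) \<in> G"
proof -
  have "(U \<union> Z, V) \<in> G"
    using belief_algebra_RW[OF ba UV] belief_algebra_RW[OF ba Z]
    by (intro belief_algebra_mono[OF ba UV]) auto
  from belief_algebra_meet[OF ba _ this Z] have "((U \<union> Z) \<inter> (U \<union> V), V \<union> Z) \<in> G"
    by auto
  moreover have "(U \<union> Z) \<inter> (U \<union> V) = U"
    using belief_algebra_RW[OF ba Z] by auto
  ultimately show ?thesis by simp
qed

lemma total_preorder_onD:
  assumes "total_preorder_on W R"
  shows total_preorder_on_refl: "w \<in> W \<Longrightarrow> (w, w) \<in> R"
    and total_preorder_on_trans: "trans R"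
    and total_preorder_on_total: "a \<in> W \<Longrightarrow> b \<in> W \<Longrightarrow> (a, b) \<in> R \<or> (b, a) \<in> R"
  using assms unfolding total_preorder_on_def total_on_def by (metis refl_onD)+

lemma cba_of_meet_witness:
  assumes R: "total_preorder_on W R" and eq: "U1 \<union> V1 = U2 \<union> V2"
    and a: "a \<in> U1" "a \<in> W" "\<forall>v\<in>V1. (a, v) \<in> R \<and> (v, a) \<notin> R"
    and b: "\<forall>v\<in>V2. (b, v) \<in> R \<and> (v, b) \<notin> R" and ab: "(a, b) \<in> R"
  shows "\<exists>w\<in>U1 \<inter> U2. \<forall>v\<in>V1 \<union> V2. (w, v) \<in> R \<and> (v, w) \<notin> R"
proof -
  have aV2: "\<forall>v\<in>V2. (a, v) \<in> R \<and> (v, a) \<notin> R"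
    using b ab transD[OF total_preorder_on_trans[OF R]] by meson
  then have "a \<notin> V2"
    using total_preorder_on_refl[OF R a(2)] by blast
  then have "a \<in> U2"
    using eq a(1) by blast
  then show ?thesis
    using a(1,3) aV2 by blast
qed

lemma cba_of_meet:
  assumes R: "total_preorder_on W R" and eq: "U1 \<union> V1 = U2 \<union> V2"
    and G1: "(U1, V1) \<in> cba_of W R" and G2: "(U2, V2) \<in> cba_of W R"
  shows "(U1 \<inter> U2, V1 \<union> V2) \<in> cba_of W R"
proof -
  have W: "U1 \<subseteq> W" "U2 \<subseteq> W" "V1 \<subseteq> W" "V2 \<subseteq> W" "U1 \<inter> V1 = {}" "U2 \<inter> V2 = {}"
    using G1 G2 unfolding cba_of_def by auto
  obtain a where a: "a \<in> U1" "\<forall>v\<in>V1. (a, v) \<in> R \<and> (v, a) \<notin> R"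
    using G1 unfolding cba_of_def by blast
  obtain b where b: "b \<in> U2" "\<forall>v\<in>V2. (b, v) \<in> R \<and> (v, b) \<notin> R"
    using G2 unfolding cba_of_def by blast
  have "a \<in> W" "b \<in> W"
    using a(1) b(1) W by auto
  \<comment> \<open>of the two witnesses, the \<open>R\<close>-smaller one serves for the meet\<close>
  have "\<exists>w\<in>U1 \<inter> U2. \<forall>v\<in>V1 \<union> V2. (w, v) \<in> R \<and> (v, w) \<notin> R"
  proof (cases "(a, b) \<in> R")
    case True
    show ?thesis
      by (rule cba_of_meet_witness[OF R eq a(1) \<open>a \<in> W\<close> a(2) b(2) True])
  next
    case False
    then have "(b, a) \<in> R"
      using total_preorder_on_total[OF R \<open>a \<in> W\<close> \<open>b \<in> W\<close>] by blast
    from cba_of_meet_witness[OF R eq[symmetric] b(1) \<open>b \<in> W\<close> b(2) a(2) this] show ?thesis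
      by (simp add: Int_commute Un_commute)
  qed
  with W show ?thesis
    unfolding cba_of_def by blast
qed

lemma belief_algebra_cba_of:
  assumes R: "total_preorder_on W R"
  shows "belief_algebra W (cba_of W R)"
  unfolding belief_algebra_def
proof (intro conjI allI impI)
  show "cba_of W R \<subseteq> RW W"
    by (auto simp: cba_of_def RW_def)
next
  fix U assume "U \<subseteq> W"
  then show "(U, {}) \<in> cba_of W R \<longleftrightarrow> U \<noteq> {}"
    by (auto simp: cba_of_def)
next
  fix U V assume "(U, V) \<in> cba_of W R"
  then show "(V, U) \<notin> cba_of W R"
    unfolding cba_of_def by blast
next
  fix U V U1 V1 assume "U1 \<subseteq> W \<and> U \<subseteq> U1 \<and> (U, V) \<in> cba_of W R \<and> V1 \<subseteq> V \<and> U1 \<inter> V1 = {}"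
  then show "(U1, V1) \<in> cba_of W R"
    unfolding cba_of_def by blast
next
  fix U U1 V1 U2 V2
  assume "U = U1 \<union> V1 \<and> U = U2 \<union> V2 \<and> (U1, V1) \<in> cba_of W R \<and> (U2, V2) \<in> cba_of W R"
  then show "(U1 \<inter> U2, V1 \<union> V2) \<in> cba_of W R"
    using cba_of_meet[OF R] by metis
qed

lemma is_cba_imp_belief_algebra: "is_cba W G \<Longrightarrow> belief_algebra W G"
  unfolding is_cba_def using belief_algebra_cba_of by blast

lemma is_cba_cba_of_ranking:
  fixes f :: "'a \<Rightarrow> 'b::linorder"
  shows "is_cba W (cba_of W {(w1, w2). w1 \<in> W \<and> w2 \<in> W \<and> f w1 \<le> f w2})"
proof -
  have "total_preorder_on W {(w1, w2). w1 \<in> W \<and> w2 \<in> W \<and> f w1 \<le> f w2}"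
    unfolding total_preorder_on_def refl_on_def trans_def total_on_def by auto
  then show ?thesis
    unfolding is_cba_def by blast
qed

lemma Gen_mono:
  assumes "\<Omega> \<subseteq> \<Omega>'"
  shows "Gen W \<Omega> \<subseteq> Gen W \<Omega>'"
proof
  fix p assume "p \<in> Gen W \<Omega>"
  then show "p \<in> Gen W \<Omega>'"
    by induction (use assms in \<open>auto intro: Gen.intros\<close>)
qed

lemma Gen_least:
  assumes ba: "belief_algebra W G" and "\<Omega> \<subseteq> G"
  shows "Gen W \<Omega> \<subseteq> G"
proof
  fix p assume "p \<in> Gen W \<Omega>"
  then show "p \<in> G"
    by induction
      (use assms in \<open>auto intro: belief_algebra_mono[OF ba] belief_algebra_meet[OF ba]
        simp: belief_algebra_empty_iff[OF ba]\<close>)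
qed

lemma Gen_superset: "\<Omega> \<subseteq> RW W \<Longrightarrow> \<Omega> \<subseteq> Gen W \<Omega>"
  by (auto intro: Gen.base)

section \<open>Backbones\<close>

definition incomparable_on :: "'a balg \<Rightarrow> 'a set \<Rightarrow> bool" where
  "incomparable_on G B \<longleftrightarrow>
     (\<forall>X Y. X \<subseteq> B \<and> Y \<subseteq> B \<and> X \<noteq> {} \<and> Y \<noteq> {} \<and> X \<inter> Y = {} \<longrightarrow> (X, Y) \<notin> G)"

lemma incomparable_onD:
  "incomparable_on G B \<Longrightarrow> X \<subseteq> B \<Longrightarrow> Y \<subseteq> B \<Longrightarrow> X \<noteq> {} \<Longrightarrow> Y \<noteq> {} \<Longrightarrow> X \<inter> Y = {}
    \<Longrightarrow> (X, Y) \<notin> G"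
  unfolding incomparable_on_def by blast

lemma is_backbone_iff:
  "is_backbone S G bs \<longleftrightarrow>
     (\<forall>B\<in>set bs. B \<noteq> {} \<and> incomparable_on G B) \<and> sorted_wrt disjnt bs \<and> \<Union> (set bs) = S \<and>
     successively (\<lambda>X Y. (X, Y) \<in> G) bs"
  unfolding is_backbone_def incomparable_on_def[symmetric] all_set_conv_all_nth successively_conv_nth
    sorted_wrt_disjnt_iff_nth Suc_eq_plus1
  by (auto simp: all_conj_distrib)

lemma is_backbone_Nil [simp]: "is_backbone S G [] \<longleftrightarrow> S = {}"
  by (auto simp: is_backbone_iff)

lemma is_backbone_Cons:
  "is_backbone S G (B # bs) \<longleftrightarrow>
     B \<noteq> {} \<and> B \<subseteq> S \<and> incomparable_on G B \<and> (bs \<noteq> [] \<longrightarrow> (B, hd bs) \<in> G) \<and>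
     is_backbone (S - B) G bs"
proof -
  have "(\<forall>X\<in>set bs. disjnt B X) \<and> B \<union> \<Union> (set bs) = S \<longleftrightarrow> B \<subseteq> S \<and> \<Union> (set bs) = S - B"
    by (auto simp: disjnt_def)
  then show ?thesis
    unfolding is_backbone_iff by (auto simp: successively_Cons)
qed

lemma backbone_head_dominates:
  "belief_algebra W G \<Longrightarrow> S \<subseteq> W \<Longrightarrow> is_backbone S G (B # bs) \<Longrightarrow> (B, S - B) \<in> G"
proof (induction bs arbitrary: S B)
  case Nil
  then have "B \<noteq> {}" "B \<subseteq> W" and rest: "S - B = {}"
    by (auto simp: is_backbone_Cons)
  then have "(B, {}) \<in> G"
    using belief_algebra_empty_iff[OF Nil.prems(1)] by simp
  then show ?case
    unfolding rest .
next
  case (Cons C cs)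
  note ba = Cons.prems(1)
  have B: "B \<subseteq> S" "(B, C) \<in> G" and C: "is_backbone (S - B) G (C # cs)"
    using Cons.prems(3) unfolding is_backbone_Cons[of S G B] by auto
  then have "C \<subseteq> S - B"
    unfolding is_backbone_Cons by blast
  have "(C, S - B - C) \<in> G"
    using Cons.IH[OF ba _ C] Cons.prems(2) by blast
  then have "(B \<union> C, S - B - C) \<in> G"
    by (rule belief_algebra_mono[OF ba]) (use Cons.prems(2) B \<open>C \<subseteq> S - B\<close> in auto)
  from belief_algebra_chain[OF ba \<open>(B, C) \<in> G\<close> this] have "(B, C \<union> (S - B - C)) \<in> G" .
  moreover have "C \<union> (S - B - C) = S - B"
    using \<open>C \<subseteq> S - B\<close> by blast
  ultimately show ?case by simp
qed

lemma backbone_head_unique: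
  assumes ba: "belief_algebra W G" and S: "S \<subseteq> W"
    and B: "is_backbone S G (B # bs)" and C: "is_backbone S G (C # cs)"
  shows "B \<subseteq> C"
proof (rule ccontr)
  assume "\<not> B \<subseteq> C"
  have "B \<subseteq> S" "C \<subseteq> S" "incomparable_on G B"
    using B C unfolding is_backbone_Cons by blast+
  have "(B \<inter> C, (S - B) \<union> (S - C)) \<in> G"
    using \<open>B \<subseteq> S\<close> \<open>C \<subseteq> S\<close>
    by (intro belief_algebra_meet[OF ba _ backbone_head_dominates[OF ba S B]
          backbone_head_dominates[OF ba S C]]) auto
  then have BC: "(B \<inter> C, B - C) \<in> G"
    by (rule belief_algebra_shrink[OF ba]) (use \<open>B \<subseteq> S\<close> in auto)
  have "(B \<inter> C, B - C) \<notin> G"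
    using belief_algebra_left_nonempty[OF ba BC] \<open>\<not> B \<subseteq> C\<close>
    by (intro incomparable_onD[OF \<open>incomparable_on G B\<close>]) auto
  with BC show False by contradiction
qed

lemma is_backbone_unique:
  "belief_algebra W G \<Longrightarrow> S \<subseteq> W \<Longrightarrow> is_backbone S G bs \<Longrightarrow> is_backbone S G cs \<Longrightarrow> bs = cs"
proof (induction bs arbitrary: S cs)
  case Nil
  then show ?case
    by (cases cs) (auto simp: is_backbone_Cons)
next
  case (Cons B bs)
  then obtain C cs' where cs: "cs = C # cs'"
    by (cases cs) (auto simp: is_backbone_Cons)
  have "B \<subseteq> C" "C \<subseteq> B"
    using backbone_head_unique[OF Cons.prems(1,2)] Cons.prems(3,4) unfolding cs by blast+
  then have "B = C" by (rule subset_antisym)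
  have "is_backbone (S - B) G bs" "is_backbone (S - B) G cs'"
    using Cons.prems(3,4) unfolding cs \<open>B = C\<close> is_backbone_Cons[of S G C] by blast+
  then have "bs = cs'"
    using Cons.IH[OF Cons.prems(1)] Cons.prems(2) by blast
  with cs \<open>B = C\<close> show ?case by simp
qed

lemma incomparable_on_minimal_cut:
  assumes ba: "belief_algebra W G" and S: "finite S" "S \<subseteq> W"
    and X: "X \<subseteq> S" "(X, S - X) \<in> G"
    and min: "\<And>Y. Y \<subseteq> S \<Longrightarrow> (Y, S - Y) \<in> G \<Longrightarrow> card X \<le> card Y"
  shows "incomparable_on G X"
  unfolding incomparable_on_def
proof (intro allI impI notI)
  fix Y Z assume YZ: "Y \<subseteq> X \<and> Z \<subseteq> X \<and> Y \<noteq> {} \<and> Z \<noteq> {} \<and> Y \<inter> Z = {}" and "(Y, Z) \<in> G"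
  have "(X - Z, Z) \<in> G"
    by (rule belief_algebra_mono[OF ba \<open>(Y, Z) \<in> G\<close>]) (use YZ X S in auto)
  moreover have "((X - Z) \<union> Z, S - X) \<in> G"
    using X YZ by (simp add: Un_absorb2)
  ultimately have "(X - Z, Z \<union> (S - X)) \<in> G"
    by (rule belief_algebra_chain[OF ba])
  moreover have "Z \<union> (S - X) = S - (X - Z)"
    using X YZ by blast
  ultimately have "card X \<le> card (X - Z)"
    using X by (intro min) auto
  moreover have "card (X - Z) < card X"
    using YZ X S by (intro psubset_card_mono) (auto intro: finite_subset)
  ultimately show False by simp
qed

lemma is_backbone_exists:
  assumes ba: "belief_algebra W G"
  shows "finite S \<Longrightarrow> S \<subseteq> W \<Longrightarrow> \<exists>bs. is_backbone S G bs"
proof (induction S rule: finite_psubset_induct)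
  case (psubset S)
  show ?case
  proof (cases "S = {}")
    case True
    then have "is_backbone S G []" by simp
    then show ?thesis ..
  next
    case False
    let ?cut = "\<lambda>X. X \<subseteq> S \<and> (X, S - X) \<in> G"
    have "?cut S"
      using belief_algebra_empty_iff[OF ba psubset.prems] False by simp
    then obtain X where X: "?cut X" and min: "\<And>Y. ?cut Y \<Longrightarrow> card X \<le> card Y"
      using ex_has_least_nat[of ?cut S card] by blast
    then have "incomparable_on G X"
      using incomparable_on_minimal_cut[OF ba psubset.hyps psubset.prems] by blast
    have "X \<noteq> {}"
      using belief_algebra_left_nonempty[OF ba] X by blast
    then obtain bs where bs: "is_backbone (S - X) G bs"
      using psubset.IH[of "S - X"] X psubset.prems by blast
    have "(X, hd bs) \<in> G" if "bs \<noteq> []"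
    proof (rule belief_algebra_shrink[OF ba])
      show "(X, S - X) \<in> G" using X by blast
      show "hd bs \<subseteq> S - X"
        using bs hd_in_set[OF that] unfolding is_backbone_iff by blast
    qed
    with X \<open>X \<noteq> {}\<close> \<open>incomparable_on G X\<close> bs have "is_backbone S G (X # bs)"
      by (simp add: is_backbone_Cons)
    then show ?thesis ..
  qed
qed

lemma is_backbone_backbone:
  assumes ba: "belief_algebra W G" and fin: "finite W"
  shows "is_backbone W G (backbone W G)"
proof -
  obtain bs where bs: "is_backbone W G bs"
    using is_backbone_exists[OF ba fin order_refl] by blast
  have "backbone W G = bs"
    unfolding backbone_def
    by (rule the_equality[where P = "is_backbone W G", OF bs])
      (use is_backbone_unique[OF ba order_refl bs] in blast)
  with bs show ?thesis by simp
qed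

lemma backbone_head_disjoint:
  assumes ba: "belief_algebra W G" and S: "S \<subseteq> W" and B: "is_backbone S G (B # bs)"
    and UV: "(U, V) \<in> G" and U: "U \<subseteq> S"
  shows "V \<inter> B = {}"
proof (rule ccontr)
  define X where "X = V \<inter> B"
  assume "V \<inter> B \<noteq> {}"
  then have "X \<noteq> {}" by (simp add: X_def)
  have "B \<subseteq> S" and inc: "incomparable_on G B"
    using B unfolding is_backbone_Cons by blast+
  have UVW: "U \<subseteq> W" "U \<inter> V = {}"
    using belief_algebra_RW[OF ba UV] by auto
  have "(U, X) \<in> G"
    by (rule belief_algebra_shrink[OF ba UV]) (simp add: X_def)
  then have "(U \<union> (B - X), X) \<in> G"
    by (rule belief_algebra_mono[OF ba]) (use UVW \<open>B \<subseteq> S\<close> S in \<open>auto simp: X_def\<close>)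
  moreover have "(B, U - B) \<in> G"
    by (rule belief_algebra_shrink[OF ba backbone_head_dominates[OF ba S B]]) (use U in auto)
  ultimately have "((U \<union> (B - X)) \<inter> B, X \<union> (U - B)) \<in> G"
    by (rule belief_algebra_meet[OF ba, rotated]) (auto simp: X_def)
  moreover have "(U \<union> (B - X)) \<inter> B = B - X"
    using UVW by (auto simp: X_def)
  ultimately have "(B - X, X \<union> (U - B)) \<in> G" by simp
  then have BX: "(B - X, X) \<in> G"
    by (rule belief_algebra_shrink[OF ba]) auto
  have "(B - X, X) \<notin> G"
    using belief_algebra_left_nonempty[OF ba BX] \<open>X \<noteq> {}\<close>
    by (intro incomparable_onD[OF inc]) (auto simp: X_def)
  with BX show False by contradiction
qed

section \<open>Ranking worlds by backbone blocks\<close>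

\<comment> \<open>the list counterpart of \<open>block_index\<close>; worlds outside all blocks get rank \<open>length bs\<close>\<close>
fun block_rank :: "'a set list \<Rightarrow> 'a \<Rightarrow> nat" where
  "block_rank [] w = 0"
| "block_rank (B # bs) w = (if w \<in> B then 0 else Suc (block_rank bs w))"

lemma block_rank_le_length: "block_rank bs w \<le> length bs"
  by (induction bs) auto

lemma finite_block_rank_image: "finite (block_rank bs ` X)"
  by (rule finite_subset[of _ "{..length bs}"]) (auto simp: block_rank_le_length)

lemma block_rank_nth: "w \<in> \<Union> (set bs) \<Longrightarrow> block_rank bs w < length bs \<and> w \<in> bs ! block_rank bs w"
  by (induction bs) auto

lemma block_rank_eq: "sorted_wrt disjnt bs \<Longrightarrow> i < length bs \<Longrightarrow> w \<in> bs ! i \<Longrightarrow> block_rank bs w = i"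
proof (induction bs arbitrary: i)
  case Nil
  then show ?case by simp
next
  case (Cons B bs)
  show ?case
  proof (cases i)
    case 0
    with Cons.prems show ?thesis by simp
  next
    case (Suc j)
    with Cons.prems have "j < length bs" "w \<in> bs ! j" by simp_all
    moreover have "w \<notin> B"
      using Cons.prems(1) nth_mem[OF \<open>j < length bs\<close>] \<open>w \<in> bs ! j\<close> by (auto simp: disjnt_def)
    ultimately show ?thesis
      using Cons.IH Cons.prems(1) Suc by simp
  qed
qed

lemma block_rank_image_nth:
  assumes disj: "sorted_wrt disjnt bs" and i: "i < length bs" and ne: "bs ! i \<noteq> {}"
  shows "block_rank bs ` (bs ! i) = {i}"
proof -
  have "block_rank bs ` (bs ! i) = (\<lambda>_. i) ` (bs ! i)"
    using block_rank_eq[OF disj i] by (rule image_cong[OF refl])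
  with ne show ?thesis
    by (simp add: image_constant_conv)
qed

lemma ex_block_rank_less:
  "belief_algebra W G \<Longrightarrow> S \<subseteq> W \<Longrightarrow> is_backbone S G bs \<Longrightarrow> (U, V) \<in> G \<Longrightarrow> U \<subseteq> S \<Longrightarrow> V \<subseteq> S
    \<Longrightarrow> \<exists>w1\<in>U. \<forall>w2\<in>V. block_rank bs w1 < block_rank bs w2"
proof (induction bs arbitrary: S)
  case Nil
  then show ?case
    using belief_algebra_left_nonempty[OF Nil.prems(1,4)] by simp
next
  case (Cons B bs)
  have VB: "V \<inter> B = {}"
    by (rule backbone_head_disjoint[OF Cons.prems(1-5)])
  show ?case
  proof (cases "U \<inter> B = {}")
    case False
    then obtain w1 where "w1 \<in> U" "w1 \<in> B" by blast
    with VB show ?thesis by auto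
  next
    case True
    have bs: "is_backbone (S - B) G bs"
      using Cons.prems(3) unfolding is_backbone_Cons by blast
    have "\<exists>w1\<in>U. \<forall>w2\<in>V. block_rank bs w1 < block_rank bs w2"
      by (rule Cons.IH[OF Cons.prems(1) _ bs Cons.prems(4)]) (use Cons.prems True VB in auto)
    with True VB show ?thesis by fastforce
  qed
qed

lemma block_index_eq_block_rank:
  assumes ba: "belief_algebra W G" and fin: "finite W" and w: "w \<in> W"
  shows "block_index W G w = block_rank (backbone W G) w"
proof -
  let ?bs = "backbone W G"
  have disj: "sorted_wrt disjnt ?bs" and W: "\<Union> (set ?bs) = W"
    using is_backbone_backbone[OF ba fin] unfolding is_backbone_iff by blast+
  show ?thesis
    unfolding block_index_def
  proof (rule the_equality)
    show "block_rank ?bs w < length ?bs \<and> w \<in> ?bs ! block_rank ?bs w"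
      using block_rank_nth[of w ?bs] W w by blast
    show "i = block_rank ?bs w" if "i < length ?bs \<and> w \<in> ?bs ! i" for i
      using block_rank_eq[OF disj conjunct1[OF that] conjunct2[OF that]] by simp
  qed
qed

definition rank_cba :: "'a set \<Rightarrow> 'a set list \<Rightarrow> 'a balg" where
  "rank_cba W bs = cba_of W {(w1, w2). w1 \<in> W \<and> w2 \<in> W \<and> block_rank bs w1 \<le> block_rank bs w2}"

lemma mem_rank_cba:
  "(U, V) \<in> rank_cba W bs \<longleftrightarrow>
     U \<subseteq> W \<and> V \<subseteq> W \<and> U \<inter> V = {} \<and> (\<exists>w1\<in>U. \<forall>w2\<in>V. block_rank bs w1 < block_rank bs w2)"
  unfolding rank_cba_def cba_of_def by (force simp: not_le)

lemma Com_eq_rank_cba: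
  assumes ba: "belief_algebra W G" and fin: "finite W"
  shows "Com W G = rank_cba W (backbone W G)"
proof -
  have "{(w1, w2). w1 \<in> W \<and> w2 \<in> W \<and> block_index W G w1 \<le> block_index W G w2} =
        {(w1, w2). w1 \<in> W \<and> w2 \<in> W \<and> block_rank (backbone W G) w1 \<le> block_rank (backbone W G) w2}"
    using block_index_eq_block_rank[OF ba fin] by auto
  then show ?thesis
    unfolding Com_def rank_cba_def by simp
qed

lemma subset_Com:
  assumes ba: "belief_algebra W G" and fin: "finite W"
  shows "G \<subseteq> Com W G"
proof
  fix p assume "p \<in> G"
  then obtain U V where p: "p = (U, V)" and UV: "(U, V) \<in> G"
    by (cases p) simp
  have W: "U \<subseteq> W" "V \<subseteq> W" "U \<inter> V = {}"
    using belief_algebra_RW[OF ba UV] by auto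
  show "p \<in> Com W G"
    using ex_block_rank_less[OF ba order_refl is_backbone_backbone[OF ba fin] UV W(1,2)] W
    unfolding p Com_eq_rank_cba[OF ba fin] mem_rank_cba by blast
qed

lemma is_backbone_rank_cba:
  assumes bb: "is_backbone W G bs"
  shows "is_backbone W (rank_cba W bs) bs"
proof -
  have disj: "sorted_wrt disjnt bs" and W: "\<Union> (set bs) = W" and ne: "\<forall>B\<in>set bs. B \<noteq> {}"
    using bb unfolding is_backbone_iff by blast+
  have rank: "\<And>i w. i < length bs \<Longrightarrow> w \<in> bs ! i \<Longrightarrow> block_rank bs w = i"
    using block_rank_eq[OF disj] .
  have "incomparable_on (rank_cba W bs) B" if B: "B \<in> set bs" for B
    unfolding incomparable_on_def mem_rank_cba
  proof (intro allI impI notI)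
    fix X Y
    assume XY: "X \<subseteq> B \<and> Y \<subseteq> B \<and> X \<noteq> {} \<and> Y \<noteq> {} \<and> X \<inter> Y = {}"
      and "X \<subseteq> W \<and> Y \<subseteq> W \<and> X \<inter> Y = {} \<and> (\<exists>w1\<in>X. \<forall>w2\<in>Y. block_rank bs w1 < block_rank bs w2)"
    then obtain w1 w2 where "w1 \<in> B" "w2 \<in> B" "block_rank bs w1 < block_rank bs w2"
      by blast
    moreover obtain i where "i < length bs" "B = bs ! i"
      using B by (metis in_set_conv_nth)
    ultimately show False
      using rank by simp
  qed
  moreover have "(bs ! i, bs ! Suc i) \<in> rank_cba W bs" if i: "Suc i < length bs" for i
  proof -
    have "bs ! i \<subseteq> W" "bs ! Suc i \<subseteq> W"
      using W i nth_mem[of i bs] nth_mem[of "Suc i" bs] by auto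
    moreover have "bs ! i \<inter> bs ! Suc i = {}"
      using sorted_wrt_nth_less[OF disj _ i] by (simp add: disjnt_def)
    moreover obtain w where "w \<in> bs ! i"
      using ne i nth_mem[of i bs] by fastforce
    moreover from this have "\<forall>w2\<in>bs ! Suc i. block_rank bs w < block_rank bs w2"
      using rank[of "Suc i"] rank[of i w] i by simp
    ultimately show ?thesis
      unfolding mem_rank_cba by blast
  qed
  ultimately show ?thesis
    using disj W ne unfolding is_backbone_iff successively_conv_nth by blast
qed

lemma is_cba_Com: "is_cba W (Com W G)"
  unfolding Com_def by (rule is_cba_cba_of_ranking)

lemma backbone_Com:
  assumes ba: "belief_algebra W G" and fin: "finite W"
  shows "backbone W (Com W G) = backbone W G"
proof -
  have baC: "belief_algebra W (Com W G)"
    by (rule is_cba_imp_belief_algebra[OF is_cba_Com])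
  have "is_backbone W (Com W G) (backbone W G)"
    unfolding Com_eq_rank_cba[OF ba fin]
    by (rule is_backbone_rank_cba[OF is_backbone_backbone[OF ba fin]])
  then show ?thesis
    using is_backbone_unique[OF baC order_refl is_backbone_backbone[OF baC fin]] by blast
qed

lemma ba_le_Com: "belief_algebra W G \<Longrightarrow> finite W \<Longrightarrow> ba_le W G (Com W G)"
  unfolding ba_le_def by (simp add: backbone_Com subset_Com)

lemma cba_head_strictly_below:
  assumes R: "total_preorder_on W R" and S: "S \<subseteq> W"
    and B: "is_backbone S (cba_of W R) (B # bs)" and w: "w \<in> B" and w': "w' \<in> S - B"
  shows "(w, w') \<in> R \<and> (w', w) \<notin> R"
proof -
  let ?G = "cba_of W R"
  have ba: "belief_algebra W ?G"
    by (rule belief_algebra_cba_of[OF R])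
  have "B \<subseteq> S" and inc: "incomparable_on ?G B"
    using B unfolding is_backbone_Cons by blast+
  have "(B, {w'}) \<in> ?G"
    by (rule belief_algebra_shrink[OF ba backbone_head_dominates[OF ba S B]]) (use w' in simp)
  then obtain v where v: "v \<in> B" "(v, w') \<in> R" "(w', v) \<notin> R"
    unfolding cba_of_def by blast
  have "(w, v) \<in> R"
  proof (rule ccontr)
    assume wv: "(w, v) \<notin> R"
    have "w \<in> W" "v \<in> W"
      using w v(1) \<open>B \<subseteq> S\<close> S by auto
    with wv have "w \<noteq> v" "(v, w) \<in> R"
      using total_preorder_on_refl[OF R] total_preorder_on_total[OF R] by metis+
    with \<open>w \<in> W\<close> \<open>v \<in> W\<close> wv have "({v}, {w}) \<in> ?G"
      unfolding cba_of_def by auto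
    moreover have "({v}, {w}) \<notin> ?G"
      using \<open>w \<noteq> v\<close> w v(1) by (intro incomparable_onD[OF inc]) auto
    ultimately show False by contradiction
  qed
  then show ?thesis
    using v(2,3) transD[OF total_preorder_on_trans[OF R]] by meson
qed

lemma cba_strictly_below_if_block_rank_less:
  "total_preorder_on W R \<Longrightarrow> S \<subseteq> W \<Longrightarrow> is_backbone S (cba_of W R) bs \<Longrightarrow> w \<in> S \<Longrightarrow> w' \<in> S
    \<Longrightarrow> block_rank bs w < block_rank bs w' \<Longrightarrow> (w, w') \<in> R \<and> (w', w) \<notin> R"
proof (induction bs arbitrary: S)
  case Nil
  then show ?case by simp
next
  case (Cons B bs)
  show ?case
  proof (cases "w \<in> B")
    case True
    then have "w' \<notin> B"
      using Cons.prems(6) by auto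
    then show ?thesis
      using cba_head_strictly_below[OF Cons.prems(1-3) True] Cons.prems(5) by blast
  next
    case False
    then have "w' \<notin> B"
      using Cons.prems(6) by auto
    have "is_backbone (S - B) (cba_of W R) bs"
      using Cons.prems(3) unfolding is_backbone_Cons by blast
    from Cons.IH[OF Cons.prems(1) _ this] show ?thesis
      using Cons.prems False \<open>w' \<notin> B\<close> by auto
  qed
qed

lemma rank_cba_backbone_eq:
  assumes G: "is_cba W G" and fin: "finite W"
  shows "rank_cba W (backbone W G) = G"
proof
  have ba: "belief_algebra W G"
    by (rule is_cba_imp_belief_algebra[OF G])
  show "G \<subseteq> rank_cba W (backbone W G)"
    using subset_Com[OF ba fin] unfolding Com_eq_rank_cba[OF ba fin] .
  obtain R where R: "total_preorder_on W R" and GR: "G = cba_of W R"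
    using G unfolding is_cba_def by blast
  have bb: "is_backbone W (cba_of W R) (backbone W G)"
    using is_backbone_backbone[OF ba fin] unfolding GR .
  show "rank_cba W (backbone W G) \<subseteq> G"
  proof
    fix p assume p_mem: "p \<in> rank_cba W (backbone W G)"
    obtain U V where p: "p = (U, V)" by fastforce
    obtain w1 where W: "U \<subseteq> W" "V \<subseteq> W" "U \<inter> V = {}" and w1: "w1 \<in> U"
      and less: "\<forall>w2\<in>V. block_rank (backbone W G) w1 < block_rank (backbone W G) w2"
      using p_mem unfolding p mem_rank_cba by blast
    have "\<forall>w2\<in>V. (w1, w2) \<in> R \<and> (w2, w1) \<notin> R"
      using cba_strictly_below_if_block_rank_less[OF R order_refl bb] less w1 W by blast
    with W w1 show "p \<in> G"
      unfolding p GR cba_of_def by blast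
  qed
qed

section \<open>Supports\<close>

lemma mem_rank_cba_iff_Min:
  "U \<noteq> {} \<Longrightarrow> V \<noteq> {} \<Longrightarrow> (U, V) \<in> rank_cba W bs \<longleftrightarrow>
     U \<subseteq> W \<and> V \<subseteq> W \<and> U \<inter> V = {} \<and> Min (block_rank bs ` U) < Min (block_rank bs ` V)"
  by (simp add: mem_rank_cba ex_less_all_iff_Min finite_block_rank_image)

lemma Min_block_rank_nth:
  assumes "\<Union> (set bs) = W" and "X \<subseteq> W" "X \<noteq> {}"
  shows "Min (block_rank bs ` X) < length bs \<and> X \<inter> bs ! Min (block_rank bs ` X) \<noteq> {}"
proof -
  obtain w where "w \<in> X" "block_rank bs w = Min (block_rank bs ` X)"
    using Min_in[OF finite_block_rank_image] assms(3) by (metis empty_is_image imageE)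
  with block_rank_nth[of w bs] assms(1,2) show ?thesis by auto
qed

lemma support_empty [simp]: "support W G {} = {}"
  by (simp add: support_def)

lemma support_eq_nth_Min:
  assumes bb: "is_backbone W G (backbone W G)" and U: "U \<subseteq> W" "U \<noteq> {}"
  shows "support W G U = backbone W G ! Min (block_rank (backbone W G) ` U)"
proof -
  let ?bs = "backbone W G"
  let ?m = "Min (block_rank ?bs ` U)"
  have disj: "sorted_wrt disjnt ?bs" and W: "\<Union> (set ?bs) = W"
    using bb unfolding is_backbone_iff by blast+
  have "?m \<le> i" if i: "i < length ?bs \<and> U \<inter> ?bs ! i \<noteq> {}" for i
  proof -
    from i obtain v where "v \<in> U" "v \<in> ?bs ! i" by blast
    then have "block_rank ?bs v = i"
      using block_rank_eq[OF disj] i by blast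
    with \<open>v \<in> U\<close> show ?thesis
      using Min_le[OF finite_block_rank_image] by (metis imageI)
  qed
  with Min_block_rank_nth[OF W U]
  have "(LEAST i. i < length ?bs \<and> U \<inter> ?bs ! i \<noteq> {}) = ?m"
    by (intro Least_equality) auto
  with U(2) show ?thesis
    unfolding support_def by simp
qed

lemma rank_cba_iff_support:
  assumes bb: "is_backbone W G (backbone W G)" and UV: "U \<subseteq> W" "V \<subseteq> W" "U \<inter> V = {}"
  shows "(U, V) \<in> rank_cba W (backbone W G) \<longleftrightarrow>
    (support W G U, support W G V) \<in> rank_cba W (backbone W G)"
proof -
  let ?bs = "backbone W G"
  let ?m = "\<lambda>X. Min (block_rank ?bs ` X)"
  have disj: "sorted_wrt disjnt ?bs" and W: "\<Union> (set ?bs) = W" and ne: "\<forall>B\<in>set ?bs. B \<noteq> {}"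
    using bb unfolding is_backbone_iff by blast+
  have block: "support W G X = ?bs ! ?m X" "?m X < length ?bs" "?bs ! ?m X \<subseteq> W" "?bs ! ?m X \<noteq> {}"
    "block_rank ?bs ` (?bs ! ?m X) = {?m X}"
    if "X \<subseteq> W" "X \<noteq> {}" for X
  proof -
    show "support W G X = ?bs ! ?m X" "?m X < length ?bs"
      using support_eq_nth_Min[OF bb that] Min_block_rank_nth[OF W that] by simp_all
    then show "?bs ! ?m X \<subseteq> W" "?bs ! ?m X \<noteq> {}"
      using W ne nth_mem by blast+
    then show "block_rank ?bs ` (?bs ! ?m X) = {?m X}"
      using block_rank_image_nth[OF disj \<open>?m X < length ?bs\<close>] by blast
  qed
  consider "U = {}" | "U \<noteq> {}" "V = {}" | "U \<noteq> {}" "V \<noteq> {}" by blast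
  then show ?thesis
  proof cases
    case 1
    then show ?thesis by (simp add: mem_rank_cba)
  next
    case 2
    then show ?thesis
      using block[OF UV(1) 2(1)] UV(1) by (simp add: mem_rank_cba ex_in_conv)
  next
    case 3
    have "?bs ! ?m U \<inter> ?bs ! ?m V = {}" if "?m U < ?m V"
      using sorted_wrt_nth_less[OF disj that block(2)[OF UV(2) 3(2)]] by (simp add: disjnt_def)
    then show ?thesis
      using block[OF UV(1) 3(1)] block[OF UV(2) 3(2)] UV by (simp add: mem_rank_cba_iff_Min 3) blast
  qed
qed

lemma is_cba_iff_support:
  assumes G: "is_cba W G" and fin: "finite W" and UV: "U \<subseteq> W" "V \<subseteq> W" "U \<inter> V = {}"
  shows "(U, V) \<in> G \<longleftrightarrow> (support W G U, support W G V) \<in> G"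
  using rank_cba_iff_support[OF is_backbone_backbone[OF is_cba_imp_belief_algebra[OF G] fin] UV]
  unfolding rank_cba_backbone_eq[OF G fin] .

lemma revision_operatorD:
  assumes "revision_operator W op" and "belief_algebra W G1" "belief_algebra W G2"
  shows revision_operator_RA1: "G2 \<subseteq> op G1 G2"
    and revision_operator_RA2: "\<exists>\<Omega>. \<Omega> \<subseteq> G1 \<union> G2 \<and> op G1 G2 = Gen W \<Omega>"
  using assms unfolding revision_operator_def by simp_all

lemma revision_operator_RA3:
  "revision_operator W op \<Longrightarrow> is_cba W G1 \<Longrightarrow> is_cba W G2 \<Longrightarrow> is_cba W (op G1 G2)"
  unfolding revision_operator_def by simp

lemma revision_operator_RA5:
  "revision_operator W op \<Longrightarrow> belief_algebra W G1 \<Longrightarrow> belief_algebra W G2 \<Longrightarrow>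
    belief_algebra W G1' \<Longrightarrow> belief_algebra W G2' \<Longrightarrow> ba_le W G1 G1' \<Longrightarrow> ba_le W G2 G2' \<Longrightarrow>
    op G1 G2 \<subseteq> op G1' G2'"
  unfolding revision_operator_def by simp

lemma revision_operator_RA6:
  "revision_operator W op \<Longrightarrow> belief_algebra W G1 \<Longrightarrow> belief_algebra W G2 \<Longrightarrow> \<Omega> \<subseteq> G1 \<union> G2 \<Longrightarrow>
    Gen W \<Omega> \<subseteq> op (Com W G1) (Com W G2) \<Longrightarrow> op G1 G2 \<subseteq> Gen W \<Omega> \<Longrightarrow> op G1 G2 = Gen W \<Omega>"
  unfolding revision_operator_def by simp

theorem proposition3:
  fixes W :: "'a set" and op :: "'a balg \<Rightarrow> 'a balg \<Rightarrow> 'a balg"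
    and G1 G2 :: "'a balg"
  assumes "finite W" and "W \<noteq> {}"
    and "belief_algebra W G1" and "belief_algebra W G2"
    and "revision_operator W op"
  defines "Gs \<equiv> op (Com W G1) (Com W G2)"
  shows "op G1 G2 = Gen W ((G1 \<inter> Gs) \<union> G2) \<and>
         G1 \<inter> Gs = {(U, V). (U, V) \<in> G1 \<and> (support W Gs U, support W Gs V) \<in> Gs}"
proof
  note fin = assms(1) and ba1 = assms(3) and ba2 = assms(4) and op = assms(5)
  note baCom = is_cba_imp_belief_algebra[OF is_cba_Com]
  have cbaGs: "is_cba W Gs"
    unfolding Gs_def by (rule revision_operator_RA3[OF op is_cba_Com is_cba_Com])
  have below_Gs: "op G1 G2 \<subseteq> Gs"
    unfolding Gs_def
    by (rule revision_operator_RA5[OF op ba1 ba2 baCom baCom ba_le_Com[OF ba1 fin] ba_le_Com[OF ba2 fin]])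
  obtain \<Omega> where \<Omega>: "\<Omega> \<subseteq> G1 \<union> G2" and op_eq: "op G1 G2 = Gen W \<Omega>"
    using revision_operator_RA2[OF op ba1 ba2] by blast
  have "\<Omega> \<subseteq> RW W"
    using \<Omega> belief_algebra_subset_RW[OF ba1] belief_algebra_subset_RW[OF ba2] by blast
  then have "\<Omega> \<subseteq> op G1 G2"
    unfolding op_eq by (rule Gen_superset)
  with \<Omega> below_Gs have "\<Omega> \<subseteq> (G1 \<inter> Gs) \<union> G2" by blast
  then have upper: "op G1 G2 \<subseteq> Gen W ((G1 \<inter> Gs) \<union> G2)"
    unfolding op_eq by (rule Gen_mono)
  have "G2 \<subseteq> Gs"
    using revision_operator_RA1[OF op ba1 ba2] below_Gs by blast
  then have "Gen W ((G1 \<inter> Gs) \<union> G2) \<subseteq> Gs"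
    by (intro Gen_least[OF is_cba_imp_belief_algebra[OF cbaGs]]) blast
  with upper show "op G1 G2 = Gen W ((G1 \<inter> Gs) \<union> G2)"
    unfolding Gs_def by (intro revision_operator_RA6[OF op ba1 ba2]) auto
  show "G1 \<inter> Gs = {(U, V). (U, V) \<in> G1 \<and> (support W Gs U, support W Gs V) \<in> Gs}"
    using is_cba_iff_support[OF cbaGs fin] belief_algebra_RW[OF ba1] by auto
qed

end
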